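(* Let $(X,d)$ be a locally compact metric space with a flow $\pi$ and let $M\subseteq X$. For $\varepsilon,t>0$ put $A_{\varepsilon,t}=\overline{P_t(M,\varepsilon)\cdot[t,\infty)}$. Then $$\bigcap_{\varepsilon>0,\,t>0}P_t(M,\varepsilon)=\bigcap_{\varepsilon>0,\,t>0}A_{\varepsilon,t}.$$
   Context: A flow is a continuous map $\pi: X\times\mathbb{R}\to X$ with $\pi(x,0)=x$ and $\pi(\pi(x,t),s)=\pi(x,t+s)$; write $x\cdot t=\pi(x,t)$ and $Y\cdot T=\{y\cdot s: y\in Y, s\in T\}$. For $x,y\in X$ and $\varepsilon,t>0$, an $(\varepsilon,t)$-chain from $x$ to $y$ is a pair of finite sequences $x=x_1,\dots,x_{n+1}=y$ in $X$ and $t_1,\dots,t_n$ in $\mathbb{R}^+$ with $t_i\ge t$ and $d(x_i\cdot t_i,x_{i+1})\le\varepsilon$ for all $i$. $P_t(M,\varepsilon)$ is the set of $y\in X$ such that there is an $(\varepsilon,t)$-chain from $x$ to $y$ for some $x\in M$. *)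

theory Defs
  imports "HOL-Analysis.Analysis"
begin

definition is_flow :: "('a::metric_space \<Rightarrow> real \<Rightarrow> 'a) \<Rightarrow> bool" where
  "is_flow \<pi> \<longleftrightarrow> continuous_on UNIV (\<lambda>p. \<pi> (fst p) (snd p))
     \<and> (\<forall>x. \<pi> x 0 = x) \<and> (\<forall>x t s. \<pi> (\<pi> x t) s = \<pi> x (t + s))"

definition chain :: "('a::metric_space \<Rightarrow> real \<Rightarrow> 'a) \<Rightarrow> real \<Rightarrow> real \<Rightarrow> 'a \<Rightarrow> 'a \<Rightarrow> bool" where
  "chain \<pi> \<epsilon> t x y \<longleftrightarrow> (\<exists>n::nat. n \<ge> 1 \<and> (\<exists>xs ts. xs 0 = x \<and> xs n = y \<and>
     (\<forall>i<n. ts i \<ge> t \<and> dist (\<pi> (xs i) (ts i)) (xs (Suc i)) \<le> \<epsilon>)))"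

definition P_set :: "('a::metric_space \<Rightarrow> real \<Rightarrow> 'a) \<Rightarrow> real \<Rightarrow> 'a set \<Rightarrow> real \<Rightarrow> 'a set" where
  "P_set \<pi> t M \<epsilon> = {y. \<exists>x\<in>M. chain \<pi> \<epsilon> t x y}"

definition flow_img :: "('a \<Rightarrow> real \<Rightarrow> 'a) \<Rightarrow> 'a set \<Rightarrow> real set \<Rightarrow> 'a set" where
  "flow_img \<pi> Y T = {\<pi> y s | y s. y \<in> Y \<and> s \<in> T}"

end

theory Submission
  imports Defs
begin

text \<open>A point lies in \<open>P\<^sub>t(M,\<epsilon>)\<close> iff it is \<open>\<epsilon>\<close>-close to some \<open>w\<cdot>s\<close> with \<open>s \<ge> t\<close> and \<open>w\<close> in \<open>M\<close>
  or in \<open>P\<^sub>t(M,\<epsilon>)\<close>. Hence the closure of \<open>P\<^sub>t(M,\<epsilon>)\<cdot>[t,\<infinity>)\<close> stays inside \<open>P\<^sub>t(M,\<epsilon>)\<close>, giving \<open>\<supseteq>\<close>.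
  Conversely, a point of \<open>P\<^sub>2\<^sub>t(M,\<delta>)\<close> with \<open>\<delta> \<le> \<epsilon>\<close> is \<open>\<delta>\<close>-close to \<open>w\<cdot>s = (w\<cdot>(s-t))\<cdot>t\<close> with
  \<open>s \<ge> 2t\<close>, and \<open>w\<cdot>(s-t)\<close> lies in \<open>P\<^sub>t(M,\<epsilon>)\<close> since it is reached from \<open>w\<close> by a step of length
  \<open>s - t \<ge> t\<close> with error \<open>0\<close>; letting \<open>\<delta> \<rightarrow> 0\<close> gives \<open>\<subseteq>\<close>.\<close>

lemma chain_mono:
  assumes "chain \<pi> d t' x y" "d \<le> e" "t \<le> t'"
  shows "chain \<pi> e t x y"
proof -
  obtain n xs ts where n: "n \<ge> 1" "xs 0 = x" "xs n = y"
    and steps: "\<forall>i<n. ts i \<ge> t' \<and> dist (\<pi> (xs i) (ts i)) (xs (Suc i)) \<le> d"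
    using assms(1) unfolding chain_def by blast
  have "\<forall>i<n. ts i \<ge> t \<and> dist (\<pi> (xs i) (ts i)) (xs (Suc i)) \<le> e"
    using steps assms(2,3) by (meson order_trans)
  then show ?thesis unfolding chain_def using n by blast
qed

lemma chain_last_step:
  assumes "chain \<pi> e t x y"
  obtains w s where "w = x \<or> chain \<pi> e t x w" "s \<ge> t" "dist (\<pi> w s) y \<le> e"
proof -
  obtain n xs ts where n: "n \<ge> 1" "xs 0 = x" "xs n = y"
    and steps: "\<forall>i<n. ts i \<ge> t \<and> dist (\<pi> (xs i) (ts i)) (xs (Suc i)) \<le> e"
    using assms unfolding chain_def by blast
  have "xs (n-1) = x \<or> chain \<pi> e t x (xs (n-1))"
  proof (cases "n = 1")
    case True
    then show ?thesis using n by simp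
  next
    case False
    then have "chain \<pi> e t x (xs (n-1))"
      unfolding chain_def using n steps
      by (intro exI[of _ "n-1"]) (auto intro!: exI[of _ xs] exI[of _ ts])
    then show ?thesis by simp
  qed
  moreover have "ts (n-1) \<ge> t \<and> dist (\<pi> (xs (n-1)) (ts (n-1))) y \<le> e"
    using steps n by (metis Suc_diff_1 diff_less less_numeral_extra(1) order_less_le_trans)
  ultimately show ?thesis using that by blast
qed

lemma chain_snoc:
  assumes "w = x \<or> chain \<pi> e t x w" "s \<ge> t" "dist (\<pi> w s) y \<le> e"
  shows "chain \<pi> e t x y"
  using assms(1)
proof
  assume "w = x"
  define xs :: "nat \<Rightarrow> _" where "xs = (\<lambda>i. if i = 0 then x else y)"
  have "\<forall>i<1. s \<ge> t \<and> dist (\<pi> (xs i) s) (xs (Suc i)) \<le> e"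
    using assms(2,3) \<open>w = x\<close> unfolding xs_def by simp
  then show ?thesis unfolding chain_def
    by (intro exI[of _ "1::nat"] conjI exI[of _ xs] exI[of _ "\<lambda>_. s"]) (simp_all add: xs_def)
next
  assume "chain \<pi> e t x w"
  then obtain n xs ts where n: "n \<ge> 1" "xs 0 = x" "xs n = w"
    and steps: "\<forall>i<n. ts i \<ge> t \<and> dist (\<pi> (xs i) (ts i)) (xs (Suc i)) \<le> e"
    unfolding chain_def by blast
  define xs' where "xs' = xs(Suc n := y)"
  define ts' where "ts' = ts(n := s)"
  have "\<forall>i<Suc n. ts' i \<ge> t \<and> dist (\<pi> (xs' i) (ts' i)) (xs' (Suc i)) \<le> e"
    using steps assms(2,3) n(3) unfolding xs'_def ts'_def by (auto simp: less_Suc_eq)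
  moreover have "xs' 0 = x" "xs' (Suc n) = y" using n unfolding xs'_def by auto
  ultimately show ?thesis unfolding chain_def
    by (intro exI[of _ "Suc n"] conjI exI[of _ xs'] exI[of _ ts']) simp_all
qed

lemma P_set_iff:
  "y \<in> P_set \<pi> t M e \<longleftrightarrow>
     (\<exists>w \<in> M \<union> P_set \<pi> t M e. \<exists>s\<ge>t. dist (\<pi> w s) y \<le> e)"
proof
  assume "y \<in> P_set \<pi> t M e"
  then obtain x where "x \<in> M" "chain \<pi> e t x y" unfolding P_set_def by blast
  then show "\<exists>w \<in> M \<union> P_set \<pi> t M e. \<exists>s\<ge>t. dist (\<pi> w s) y \<le> e"
    by (elim chain_last_step) (auto simp: P_set_def)
next
  assume "\<exists>w \<in> M \<union> P_set \<pi> t M e. \<exists>s\<ge>t. dist (\<pi> w s) y \<le> e"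
  then obtain w s x where "x \<in> M" "w = x \<or> chain \<pi> e t x w" "s \<ge> t" "dist (\<pi> w s) y \<le> e"
    unfolding P_set_def by blast
  then show "y \<in> P_set \<pi> t M e" unfolding P_set_def by (blast intro: chain_snoc)
qed

lemma P_set_mono:
  assumes "d \<le> e" "t \<le> t'"
  shows "P_set \<pi> t' M d \<subseteq> P_set \<pi> t M e"
  using chain_mono[OF _ assms] unfolding P_set_def by blast

lemma closure_flow_img_P_set_subset:
  assumes "e > 0"
  shows "closure (flow_img \<pi> (P_set \<pi> t M e) {t..}) \<subseteq> P_set \<pi> t M e"
proof
  fix y assume "y \<in> closure (flow_img \<pi> (P_set \<pi> t M e) {t..})"
  then obtain z s where "z \<in> P_set \<pi> t M e" "s \<ge> t" "dist (\<pi> z s) y < e"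
    using assms unfolding closure_approachable flow_img_def by auto
  then show "y \<in> P_set \<pi> t M e" by (subst P_set_iff) force
qed

lemma P_set_near_flow_img:
  assumes group_law: "\<And>x a b. \<pi> (\<pi> x a) b = \<pi> x (a + b)"
    and "y \<in> P_set \<pi> (2 * t) M d" "d \<le> e" "t \<ge> 0"
  shows "\<exists>p \<in> flow_img \<pi> (P_set \<pi> t M e) {t..}. dist p y \<le> d"
proof -
  obtain w s where w: "w \<in> M \<union> P_set \<pi> (2 * t) M d" and s: "s \<ge> 2 * t" "dist (\<pi> w s) y \<le> d"
    using P_set_iff[THEN iffD1, OF assms(2)] by blast
  have "w \<in> M \<union> P_set \<pi> t M e"
    using w P_set_mono[OF \<open>d \<le> e\<close>, of t "2 * t" \<pi> M] \<open>t \<ge> 0\<close> by auto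
  moreover have "e \<ge> 0" using s(2) \<open>d \<le> e\<close> zero_le_dist[of "\<pi> w s" y] by linarith
  ultimately have "\<pi> w (s - t) \<in> P_set \<pi> t M e"
    using s(1) by (intro P_set_iff[THEN iffD2] bexI[of _ w] exI[of _ "s - t"]) auto
  moreover have "\<pi> w s = \<pi> (\<pi> w (s - t)) t" by (simp add: group_law)
  ultimately have "\<pi> w s \<in> flow_img \<pi> (P_set \<pi> t M e) {t..}"
    unfolding flow_img_def by blast
  with s(2) show ?thesis by blast
qed

theorem lemma3p4:
  fixes \<pi> :: "'a::metric_space \<Rightarrow> real \<Rightarrow> 'a" and M :: "'a set"
  assumes "locally compact (UNIV :: 'a set)"
    and "is_flow \<pi>"
  shows "(\<Inter>\<epsilon>\<in>{0<..}. \<Inter>t\<in>{0<..}. P_set \<pi> t M \<epsilon>)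
       = (\<Inter>\<epsilon>\<in>{0<..}. \<Inter>t\<in>{0<..}. closure (flow_img \<pi> (P_set \<pi> t M \<epsilon>) {t..}))"
proof (intro equalityI subsetI INT_I)
  fix y and \<epsilon> t :: real
  assume y: "y \<in> (\<Inter>\<epsilon>\<in>{0<..}. \<Inter>t\<in>{0<..}. P_set \<pi> t M \<epsilon>)"
    and \<epsilon>: "\<epsilon> \<in> {0<..}" and t: "t \<in> {0<..}"
  have group_law: "\<And>x a b. \<pi> (\<pi> x a) b = \<pi> x (a + b)"
    using assms(2) unfolding is_flow_def by blast
  show "y \<in> closure (flow_img \<pi> (P_set \<pi> t M \<epsilon>) {t..})"
    unfolding closure_approachable
  proof (intro allI impI)
    fix r :: real
    assume "r > 0"
    then have "y \<in> P_set \<pi> (2 * t) M (min \<epsilon> (r / 2))"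
      using y \<epsilon> t by auto
    then obtain p where "p \<in> flow_img \<pi> (P_set \<pi> t M \<epsilon>) {t..}" "dist p y \<le> min \<epsilon> (r / 2)"
      using P_set_near_flow_img[OF group_law _ min.cobounded1] t by fastforce
    with \<open>r > 0\<close> show "\<exists>p \<in> flow_img \<pi> (P_set \<pi> t M \<epsilon>) {t..}. dist p y < r"
      by force
  qed
next
  fix y and \<epsilon> t :: real
  assume "y \<in> (\<Inter>\<epsilon>\<in>{0<..}. \<Inter>t\<in>{0<..}. closure (flow_img \<pi> (P_set \<pi> t M \<epsilon>) {t..}))"
    and "\<epsilon> \<in> {0<..}" "t \<in> {0<..}"
  then show "y \<in> P_set \<pi> t M \<epsilon>"
    using closure_flow_img_P_set_subset[of \<epsilon> \<pi> t M] by auto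
qed

end
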